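(* Let $k$ be a field, $H$ a $k$-coalgebra, $X$ a global $H$-comodule regarded as a partial comodule datum $(X,X\otimes H,\mathrm{id}_{X\otimes H},\rho_X)$, and let $(Y,Y\bullet H,\pi_Y,\rho_Y)$ be a partial subcomodule of $X$. Then $Y$ is again global, i.e. $\pi_Y$ is an isomorphism.
   Context: A partial comodule datum over $H$ (in $k$-vector spaces) is a quadruple $(Y,Y\bullet H,\pi_Y,\rho_Y)$ with $\pi_Y:Y\otimes H\to Y\bullet H$ a surjective linear map and $\rho_Y:Y\to Y\bullet H$ linear. A morphism of partial comodule data $Y\to X$ is a pair $(f,f\bullet H)$ of linear maps $f:Y\to X$, $f\bullet H:Y\bullet H\to X\bullet H$ with $(f\bullet H)\rho_Y=\rho_Xf$ and $(f\bullet H)\pi_Y=\pi_X(f\otimes H)$. A partial subcomodule of $X$ is a partial comodule datum $Y$ together with a morphism $(f,f\bullet H):Y\to X$ such that both $f$ and $f\bullet H$ are injective. A partial comodule datum is called global when its map $\pi$ is an isomorphism. *)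

theory Defs
  imports Main "HOL.Vector_Spaces" "HOL-Library.Poly_Mapping"
begin

text \<open>A k-vector space is a type 'v::ab_group_add with a scalar multiplication
  s :: 'k \<Rightarrow> 'v \<Rightarrow> 'v satisfying vector_space s (HOL.Vector_Spaces);
  linear maps are Vector_Spaces.linear.\<close>

text \<open>Free vector space on a set A: finitely supported functions A \<Rightarrow>0 k.\<close>

definition delta :: "'a \<Rightarrow> 'a \<Rightarrow>\<^sub>0 'k::zero_neq_one" where
  "delta x = Poly_Mapping.single x 1"

definition fscale :: "'k::field \<Rightarrow> ('a \<Rightarrow>\<^sub>0 'k) \<Rightarrow> ('a \<Rightarrow>\<^sub>0 'k)" where
  "fscale c p = Poly_Mapping.map ((*) c) p"

definition tensor_rels ::
  "('k::field \<Rightarrow> 'v::ab_group_add \<Rightarrow> 'v) \<Rightarrow> ('k \<Rightarrow> 'w::ab_group_add \<Rightarrow> 'w)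
   \<Rightarrow> ('v \<times> 'w \<Rightarrow>\<^sub>0 'k) set" where
  "tensor_rels sV sW =
     {delta (v + v', w) - delta (v, w) - delta (v', w) | v v' w. True} \<union>
     {delta (v, w + w') - delta (v, w) - delta (v, w') | v w w'. True} \<union>
     {delta (sV c v, w) - fscale c (delta (v, w)) | c v w. True} \<union>
     {delta (v, sW c w) - fscale c (delta (v, w)) | c v w. True}"

text \<open>(T, q) is a tensor product of V and W: T is (isomorphic to) the quotient
  of the free vector space on V \<times> W by the span of the bilinearity relations,
  with q the quotient map; the elementary tensor v \<otimes> w is q (delta (v, w)).\<close>

definition is_tensor_product ::
  "('k::field \<Rightarrow> 'v::ab_group_add \<Rightarrow> 'v) \<Rightarrow> ('k \<Rightarrow> 'w::ab_group_add \<Rightarrow> 'w)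
   \<Rightarrow> ('k \<Rightarrow> 't::ab_group_add \<Rightarrow> 't) \<Rightarrow> (('v \<times> 'w \<Rightarrow>\<^sub>0 'k) \<Rightarrow> 't) \<Rightarrow> bool" where
  "is_tensor_product sV sW sT q \<longleftrightarrow>
     vector_space sV \<and> vector_space sW \<and>
     Vector_Spaces.linear fscale sT q \<and> surj q \<and>
     (\<forall>p. q p = 0 \<longleftrightarrow> p \<in> module.span fscale (tensor_rels sV sW))"

definition tensor_lift ::
  "('k::field \<Rightarrow> 't::ab_group_add \<Rightarrow> 't) \<Rightarrow> ('k \<Rightarrow> 'u::ab_group_add \<Rightarrow> 'u)
   \<Rightarrow> (('v \<times> 'w \<Rightarrow>\<^sub>0 'k) \<Rightarrow> 't) \<Rightarrow> ('v \<Rightarrow> 'w \<Rightarrow> 'u) \<Rightarrow> 't \<Rightarrow> 'u" where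
  "tensor_lift sT sU q \<beta> =
     (THE F. Vector_Spaces.linear sT sU F \<and> (\<forall>v w. F (q (delta (v, w))) = \<beta> v w))"

definition tensor_map ::
  "('k::field \<Rightarrow> 't1::ab_group_add \<Rightarrow> 't1) \<Rightarrow> ('k \<Rightarrow> 't2::ab_group_add \<Rightarrow> 't2)
   \<Rightarrow> (('v1 \<times> 'w1 \<Rightarrow>\<^sub>0 'k) \<Rightarrow> 't1) \<Rightarrow> (('v2 \<times> 'w2 \<Rightarrow>\<^sub>0 'k) \<Rightarrow> 't2)
   \<Rightarrow> ('v1 \<Rightarrow> 'v2) \<Rightarrow> ('w1 \<Rightarrow> 'w2) \<Rightarrow> 't1 \<Rightarrow> 't2" where
  "tensor_map sT1 sT2 q1 q2 f g = tensor_lift sT1 sT2 q1 (\<lambda>v w. q2 (delta (f v, g w)))"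

text \<open>The associator (U \<otimes> V) \<otimes> W \<rightarrow> U \<otimes> (V \<otimes> W), (u \<otimes> v) \<otimes> w \<mapsto> u \<otimes> (v \<otimes> w).
  qUV : U \<otimes> V,  qA : (U \<otimes> V) \<otimes> W,  qVW : V \<otimes> W,  qB : U \<otimes> (V \<otimes> W).\<close>

definition tensor_assoc ::
  "('k::field \<Rightarrow> 'uv::ab_group_add \<Rightarrow> 'uv) \<Rightarrow> (('u \<times> 'v \<Rightarrow>\<^sub>0 'k) \<Rightarrow> 'uv)
   \<Rightarrow> ('k \<Rightarrow> 'a::ab_group_add \<Rightarrow> 'a) \<Rightarrow> (('uv \<times> 'w \<Rightarrow>\<^sub>0 'k) \<Rightarrow> 'a)
   \<Rightarrow> (('v \<times> 'w \<Rightarrow>\<^sub>0 'k) \<Rightarrow> 'vw)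
   \<Rightarrow> ('k \<Rightarrow> 'b::ab_group_add \<Rightarrow> 'b) \<Rightarrow> (('u \<times> 'vw \<Rightarrow>\<^sub>0 'k) \<Rightarrow> 'b)
   \<Rightarrow> 'a \<Rightarrow> 'b" where
  "tensor_assoc sUV qUV sA qA qVW sB qB =
     tensor_lift sA sB qA
       (\<lambda>t c. tensor_lift sUV sB qUV (\<lambda>a b. qB (delta (a, qVW (delta (b, c))))) t)"

text \<open>Coassociativity is stated
  modulo the canonical associator; the counit laws use the canonical
  identifications k \<otimes> H \<cong> H \<cong> H \<otimes> k.\<close>

definition coalgebra ::
  "('k::field \<Rightarrow> 'h::ab_group_add \<Rightarrow> 'h)
   \<Rightarrow> ('k \<Rightarrow> 'hh::ab_group_add \<Rightarrow> 'hh) \<Rightarrow> (('h \<times> 'h \<Rightarrow>\<^sub>0 'k) \<Rightarrow> 'hh)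
   \<Rightarrow> ('k \<Rightarrow> 'a::ab_group_add \<Rightarrow> 'a) \<Rightarrow> (('hh \<times> 'h \<Rightarrow>\<^sub>0 'k) \<Rightarrow> 'a)
   \<Rightarrow> ('k \<Rightarrow> 'b::ab_group_add \<Rightarrow> 'b) \<Rightarrow> (('h \<times> 'hh \<Rightarrow>\<^sub>0 'k) \<Rightarrow> 'b)
   \<Rightarrow> ('h \<Rightarrow> 'hh) \<Rightarrow> ('h \<Rightarrow> 'k) \<Rightarrow> bool" where
  "coalgebra sH sHH qHH sA qA sB qB \<Delta> \<epsilon> \<longleftrightarrow>
     is_tensor_product sH sH sHH qHH \<and>
     is_tensor_product sHH sH sA qA \<and>
     is_tensor_product sH sHH sB qB \<and>
     Vector_Spaces.linear sH sHH \<Delta> \<and>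
     Vector_Spaces.linear sH ((*) :: 'k \<Rightarrow> 'k \<Rightarrow> 'k) \<epsilon> \<and>
     (\<forall>h. tensor_assoc sHH qHH sA qA qHH sB qB
             (tensor_map sHH sA qHH qA \<Delta> id (\<Delta> h))
          = tensor_map sHH sB qHH qB id \<Delta> (\<Delta> h)) \<and>
     (\<forall>h. tensor_lift sHH sH qHH (\<lambda>a b. sH (\<epsilon> a) b) (\<Delta> h) = h) \<and>
     (\<forall>h. tensor_lift sHH sH qHH (\<lambda>a b. sH (\<epsilon> b) a) (\<Delta> h) = h)"

definition comodule ::
  "('k::field \<Rightarrow> 'h::ab_group_add \<Rightarrow> 'h)
   \<Rightarrow> ('k \<Rightarrow> 'hh::ab_group_add \<Rightarrow> 'hh) \<Rightarrow> (('h \<times> 'h \<Rightarrow>\<^sub>0 'k) \<Rightarrow> 'hh)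
   \<Rightarrow> ('h \<Rightarrow> 'hh) \<Rightarrow> ('h \<Rightarrow> 'k)
   \<Rightarrow> ('k \<Rightarrow> 'x::ab_group_add \<Rightarrow> 'x)
   \<Rightarrow> ('k \<Rightarrow> 'xh::ab_group_add \<Rightarrow> 'xh) \<Rightarrow> (('x \<times> 'h \<Rightarrow>\<^sub>0 'k) \<Rightarrow> 'xh)
   \<Rightarrow> ('k \<Rightarrow> 'a::ab_group_add \<Rightarrow> 'a) \<Rightarrow> (('xh \<times> 'h \<Rightarrow>\<^sub>0 'k) \<Rightarrow> 'a)
   \<Rightarrow> ('k \<Rightarrow> 'b::ab_group_add \<Rightarrow> 'b) \<Rightarrow> (('x \<times> 'hh \<Rightarrow>\<^sub>0 'k) \<Rightarrow> 'b)
   \<Rightarrow> ('x \<Rightarrow> 'xh) \<Rightarrow> bool" where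
  "comodule sH sHH qHH \<Delta> \<epsilon> sX sXH qXH sA qA sB qB \<rho> \<longleftrightarrow>
     is_tensor_product sH sH sHH qHH \<and>
     is_tensor_product sX sH sXH qXH \<and>
     is_tensor_product sXH sH sA qA \<and>
     is_tensor_product sX sHH sB qB \<and>
     Vector_Spaces.linear sX sXH \<rho> \<and>
     (\<forall>x. tensor_assoc sXH qXH sA qA qHH sB qB
             (tensor_map sXH sA qXH qA \<rho> id (\<rho> x))
          = tensor_map sXH sB qXH qB id \<Delta> (\<rho> x)) \<and>
     (\<forall>x. tensor_lift sXH sX qXH (\<lambda>y h. sX (\<epsilon> h) y) (\<rho> x) = x)"

definition partial_comodule_datum ::
  "('k::field \<Rightarrow> 'h::ab_group_add \<Rightarrow> 'h)
   \<Rightarrow> ('k \<Rightarrow> 'y::ab_group_add \<Rightarrow> 'y)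
   \<Rightarrow> ('k \<Rightarrow> 'yh::ab_group_add \<Rightarrow> 'yh) \<Rightarrow> (('y \<times> 'h \<Rightarrow>\<^sub>0 'k) \<Rightarrow> 'yh)
   \<Rightarrow> ('k \<Rightarrow> 'yb::ab_group_add \<Rightarrow> 'yb) \<Rightarrow> ('yh \<Rightarrow> 'yb) \<Rightarrow> ('y \<Rightarrow> 'yb) \<Rightarrow> bool" where
  "partial_comodule_datum sH sY sYH qYH sYb \<pi> \<rho> \<longleftrightarrow>
     is_tensor_product sY sH sYH qYH \<and>
     Vector_Spaces.linear sYH sYb \<pi> \<and> surj \<pi> \<and>
     Vector_Spaces.linear sY sYb \<rho>"

definition pcd_morphism ::
  "('k::field \<Rightarrow> 'h::ab_group_add \<Rightarrow> 'h)
   \<Rightarrow> ('k \<Rightarrow> 'y::ab_group_add \<Rightarrow> 'y)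
   \<Rightarrow> ('k \<Rightarrow> 'yh::ab_group_add \<Rightarrow> 'yh) \<Rightarrow> (('y \<times> 'h \<Rightarrow>\<^sub>0 'k) \<Rightarrow> 'yh)
   \<Rightarrow> ('k \<Rightarrow> 'yb::ab_group_add \<Rightarrow> 'yb) \<Rightarrow> ('yh \<Rightarrow> 'yb) \<Rightarrow> ('y \<Rightarrow> 'yb)
   \<Rightarrow> ('k \<Rightarrow> 'x::ab_group_add \<Rightarrow> 'x)
   \<Rightarrow> ('k \<Rightarrow> 'xh::ab_group_add \<Rightarrow> 'xh) \<Rightarrow> (('x \<times> 'h \<Rightarrow>\<^sub>0 'k) \<Rightarrow> 'xh)
   \<Rightarrow> ('k \<Rightarrow> 'xb::ab_group_add \<Rightarrow> 'xb) \<Rightarrow> ('xh \<Rightarrow> 'xb) \<Rightarrow> ('x \<Rightarrow> 'xb)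
   \<Rightarrow> ('y \<Rightarrow> 'x) \<Rightarrow> ('yb \<Rightarrow> 'xb) \<Rightarrow> bool" where
  "pcd_morphism sH sY sYH qYH sYb \<pi>Y \<rho>Y sX sXH qXH sXb \<pi>X \<rho>X f fb \<longleftrightarrow>
     partial_comodule_datum sH sY sYH qYH sYb \<pi>Y \<rho>Y \<and>
     partial_comodule_datum sH sX sXH qXH sXb \<pi>X \<rho>X \<and>
     Vector_Spaces.linear sY sX f \<and> Vector_Spaces.linear sYb sXb fb \<and>
     (\<forall>y. fb (\<rho>Y y) = \<rho>X (f y)) \<and>
     (\<forall>t. fb (\<pi>Y t) = \<pi>X (tensor_map sYH sXH qYH qXH f id t))"

definition partial_subcomodule ::
  "('k::field \<Rightarrow> 'h::ab_group_add \<Rightarrow> 'h)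
   \<Rightarrow> ('k \<Rightarrow> 'y::ab_group_add \<Rightarrow> 'y)
   \<Rightarrow> ('k \<Rightarrow> 'yh::ab_group_add \<Rightarrow> 'yh) \<Rightarrow> (('y \<times> 'h \<Rightarrow>\<^sub>0 'k) \<Rightarrow> 'yh)
   \<Rightarrow> ('k \<Rightarrow> 'yb::ab_group_add \<Rightarrow> 'yb) \<Rightarrow> ('yh \<Rightarrow> 'yb) \<Rightarrow> ('y \<Rightarrow> 'yb)
   \<Rightarrow> ('k \<Rightarrow> 'x::ab_group_add \<Rightarrow> 'x)
   \<Rightarrow> ('k \<Rightarrow> 'xh::ab_group_add \<Rightarrow> 'xh) \<Rightarrow> (('x \<times> 'h \<Rightarrow>\<^sub>0 'k) \<Rightarrow> 'xh)
   \<Rightarrow> ('k \<Rightarrow> 'xb::ab_group_add \<Rightarrow> 'xb) \<Rightarrow> ('xh \<Rightarrow> 'xb) \<Rightarrow> ('x \<Rightarrow> 'xb)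
   \<Rightarrow> ('y \<Rightarrow> 'x) \<Rightarrow> ('yb \<Rightarrow> 'xb) \<Rightarrow> bool" where
  "partial_subcomodule sH sY sYH qYH sYb \<pi>Y \<rho>Y sX sXH qXH sXb \<pi>X \<rho>X f fb \<longleftrightarrow>
     pcd_morphism sH sY sYH qYH sYb \<pi>Y \<rho>Y sX sXH qXH sXb \<pi>X \<rho>X f fb \<and>
     inj f \<and> inj fb"

text \<open>A partial comodule datum is global when \<pi> is an isomorphism
  (\<pi> is linear by definition, so: bijective).\<close>

definition global_pcd ::
  "('k::field \<Rightarrow> 'h::ab_group_add \<Rightarrow> 'h)
   \<Rightarrow> ('k \<Rightarrow> 'y::ab_group_add \<Rightarrow> 'y)
   \<Rightarrow> ('k \<Rightarrow> 'yh::ab_group_add \<Rightarrow> 'yh) \<Rightarrow> (('y \<times> 'h \<Rightarrow>\<^sub>0 'k) \<Rightarrow> 'yh)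
   \<Rightarrow> ('k \<Rightarrow> 'yb::ab_group_add \<Rightarrow> 'yb) \<Rightarrow> ('yh \<Rightarrow> 'yb) \<Rightarrow> ('y \<Rightarrow> 'yb) \<Rightarrow> bool" where
  "global_pcd sH sY sYH qYH sYb \<pi> \<rho> \<longleftrightarrow>
     partial_comodule_datum sH sY sYH qYH sYb \<pi> \<rho> \<and> bij \<pi>"

end

theory Submission
  imports Defs
begin

text \<open>Over a field every injective linear map has a linear left inverse, so by functoriality
  of the tensor product f \<otimes> H is injective.  As \<pi>_X is the identity, the morphism
  condition (f\<bullet>H) \<pi>_Y = \<pi>_X (f \<otimes> H) then forces \<pi>_Y to be injective, and it is
  surjective by definition.\<close>

lemma lookup_fscale [simp]: "Poly_Mapping.lookup (fscale c p) x = c * Poly_Mapping.lookup p x"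
  by (simp add: fscale_def Poly_Mapping.map.rep_eq when_def)

interpretation free: vector_space "fscale :: 'k::field \<Rightarrow> ('a \<Rightarrow>\<^sub>0 'k) \<Rightarrow> ('a \<Rightarrow>\<^sub>0 'k)"
  by unfold_locales (auto intro!: poly_mapping_eqI simp: lookup_add algebra_simps)

lemma keys_fscale_subset: "Poly_Mapping.keys (fscale c p) \<subseteq> Poly_Mapping.keys p"
  by (auto simp: in_keys_iff)

lemma sum_fscale_delta: "(\<Sum>x\<in>Poly_Mapping.keys p. fscale (Poly_Mapping.lookup p x) (delta x)) = p"
proof (rule poly_mapping_eqI)
  fix y
  have "(\<Sum>x\<in>Poly_Mapping.keys p. Poly_Mapping.lookup p x * Poly_Mapping.lookup (delta x) y)
      = (\<Sum>x\<in>Poly_Mapping.keys p. if x = y then Poly_Mapping.lookup p x else 0)"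
    by (rule sum.cong) (auto simp: delta_def lookup_single)
  then show "Poly_Mapping.lookup (\<Sum>x\<in>Poly_Mapping.keys p. fscale (Poly_Mapping.lookup p x) (delta x)) y
      = Poly_Mapping.lookup p y"
    by (simp add: lookup_sum in_keys_iff)
qed

lemma span_range_delta: "p \<in> free.span (range delta)"
  by (subst sum_fscale_delta[symmetric]) (intro free.span_sum free.span_scale free.span_base; simp)

definition free_lift :: "('k::field \<Rightarrow> 'u::ab_group_add \<Rightarrow> 'u) \<Rightarrow> ('a \<Rightarrow> 'u) \<Rightarrow> ('a \<Rightarrow>\<^sub>0 'k) \<Rightarrow> 'u" where
  "free_lift sU b p = (\<Sum>x\<in>Poly_Mapping.keys p. sU (Poly_Mapping.lookup p x) (b x))"

context
  fixes sU :: "'k::field \<Rightarrow> 'u::ab_group_add \<Rightarrow> 'u"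
  assumes "vector_space sU"
begin

interpretation U: vector_space sU by fact

lemma free_lift_delta [simp]: "free_lift sU b (delta x) = b x"
  by (simp add: free_lift_def delta_def)

lemma linear_free_lift: "Vector_Spaces.linear fscale sU (free_lift sU b)"
proof -
  have add: "free_lift sU b (p + p') = free_lift sU b p + free_lift sU b p'" for p p'
    unfolding free_lift_def by (rule setsum_keys_plus_distrib) (auto simp: U.scale_left_distrib)
  have "free_lift sU b (fscale c p) = (\<Sum>x\<in>Poly_Mapping.keys p. sU (c * Poly_Mapping.lookup p x) (b x))"
    for c p
    unfolding free_lift_def lookup_fscale
    by (rule sum.mono_neutral_left) (auto simp: keys_fscale_subset in_keys_iff)
  then have "free_lift sU b (fscale c p) = sU c (free_lift sU b p)" for c p
    by (simp add: free_lift_def U.scale_sum_right)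
  with add show ?thesis
    by (simp add: Vector_Spaces.linear_iff free.vector_space_axioms U.vector_space_axioms)
qed

end

lemma linear_factor_through_surj:
  assumes q: "Vector_Spaces.linear s1 s2 q" "surj q" and G: "Vector_Spaces.linear s1 s3 G"
    and ker: "\<And>p. q p = 0 \<Longrightarrow> G p = 0"
  shows "\<exists>F. Vector_Spaces.linear s2 s3 F \<and> G = F \<circ> q"
proof -
  interpret vector_space_pair s1 s2
    using q(1) by (simp add: vector_space_pair_def Vector_Spaces.linear_iff)
  obtain r where r: "Vector_Spaces.linear s2 s1 r" "q \<circ> r = id"
    using linear_surjective_right_inverse[OF q] by blast
  have "G p = G (r (q p))" for p
  proof -
    have "q (p - r (q p)) = 0"
      using q(1) r(2) by (simp add: module_hom.diff linear_iff_module_hom pointfree_idE)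
    then have "G (p - r (q p)) = 0"
      by (rule ker)
    moreover have "G (p - r (q p)) = G p - G (r (q p))"
      using G by (simp add: module_hom.diff linear_iff_module_hom)
    ultimately show ?thesis
      by simp
  qed
  with r(1) G show ?thesis
    by (intro exI[of _ "G \<circ> r"]) (auto simp: Vector_Spaces.linear_compose)
qed

definition bilinear_map ::
  "('k::field \<Rightarrow> 'v::ab_group_add \<Rightarrow> 'v) \<Rightarrow> ('k \<Rightarrow> 'w::ab_group_add \<Rightarrow> 'w)
   \<Rightarrow> ('k \<Rightarrow> 'u::ab_group_add \<Rightarrow> 'u) \<Rightarrow> ('v \<Rightarrow> 'w \<Rightarrow> 'u) \<Rightarrow> bool" where
  "bilinear_map sV sW sU \<beta> \<longleftrightarrow>
     (\<forall>v v' w. \<beta> (v + v') w = \<beta> v w + \<beta> v' w) \<and>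
     (\<forall>v w w'. \<beta> v (w + w') = \<beta> v w + \<beta> v w') \<and>
     (\<forall>c v w. \<beta> (sV c v) w = sU c (\<beta> v w)) \<and>
     (\<forall>c v w. \<beta> v (sW c w) = sU c (\<beta> v w))"

lemma bilinear_map_compose_linear:
  assumes "bilinear_map sV' sW' sU \<beta>" "Vector_Spaces.linear sV sV' f" "Vector_Spaces.linear sW sW' g"
  shows "bilinear_map sV sW sU (\<lambda>v w. \<beta> (f v) (g w))"
  using assms by (simp add: bilinear_map_def Vector_Spaces.linear_iff)

locale tensor_product =
  fixes sV :: "'k::field \<Rightarrow> 'v::ab_group_add \<Rightarrow> 'v" and sW :: "'k \<Rightarrow> 'w::ab_group_add \<Rightarrow> 'w"
    and sT :: "'k \<Rightarrow> 't::ab_group_add \<Rightarrow> 't" and q :: "('v \<times> 'w \<Rightarrow>\<^sub>0 'k) \<Rightarrow> 't"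
  assumes is_tensor_product: "is_tensor_product sV sW sT q"
begin

lemma linear_quotient: "Vector_Spaces.linear fscale sT q"
  and surj_quotient: "surj q"
  and quotient_eq_0_iff: "q p = 0 \<longleftrightarrow> p \<in> free.span (tensor_rels sV sW)"
  using is_tensor_product by (auto simp: is_tensor_product_def)

lemma vector_space_left: "vector_space sV"
  and vector_space_right: "vector_space sW"
  using is_tensor_product by (auto simp: is_tensor_product_def)

lemma vector_space_tensor: "vector_space sT"
  using linear_quotient by (simp add: Vector_Spaces.linear_iff)

lemma bilinear_tensor: "bilinear_map sV sW sT (\<lambda>v w. q (delta (v, w)))"
proof -
  have rel: "q a = q b" if "a - b \<in> tensor_rels sV sW" for a b
    using that quotient_eq_0_iff free.span_base linear_quotient
    by (metis linear_iff_module_hom module_hom.diff right_minus_eq)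
  have add: "q (a + b) = q a + q b" and scale: "q (fscale c a) = sT c (q a)" for a b c
    using linear_quotient by (simp_all add: Vector_Spaces.linear_iff)
  have "q (delta (v + v', w)) = q (delta (v, w) + delta (v', w))"
    and "q (delta (v, w + w')) = q (delta (v, w) + delta (v, w'))"
    and "q (delta (sV c v, w)) = q (fscale c (delta (v, w)))"
    and "q (delta (v, sW c w)) = q (fscale c (delta (v, w)))" for v v' w w' c
    by (rule rel; force simp: tensor_rels_def diff_diff_eq)+
  then show ?thesis
    by (simp add: bilinear_map_def add scale)
qed

lemma linear_eq_on_tensors:
  assumes F: "Vector_Spaces.linear sT sU F" and F': "Vector_Spaces.linear sT sU F'"
    and eq: "\<And>v w. F (q (delta (v, w))) = F' (q (delta (v, w)))"
  shows "F = F'"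
proof
  fix t
  obtain p where t: "t = q p"
    using surj_quotient by (metis surjD)
  have FF': "Vector_Spaces.linear fscale sU (F \<circ> q)" "Vector_Spaces.linear fscale sU (F' \<circ> q)"
    using linear_quotient F F' by (auto intro: Vector_Spaces.linear_compose)
  have "vector_space_pair fscale sU"
    using F by (simp add: vector_space_pair_def Vector_Spaces.linear_iff free.vector_space_axioms)
  then have "(F \<circ> q) p = (F' \<circ> q) p"
    by (rule vector_space_pair.linear_eq_on[OF _ FF' span_range_delta])
      (metis comp_apply eq rangeE surj_pair)
  then show "F t = F' t"
    by (simp add: t)
qed

lemma ex_linear_lift:
  assumes U: "vector_space sU" and \<beta>: "bilinear_map sV sW sU \<beta>"
  shows "\<exists>F. Vector_Spaces.linear sT sU F \<and> (\<forall>v w. F (q (delta (v, w))) = \<beta> v w)"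
proof -
  define G where "G = free_lift sU (case_prod \<beta>)"
  have G: "Vector_Spaces.linear fscale sU G"
    unfolding G_def using U by (rule linear_free_lift)
  then interpret G: module_hom fscale sU G
    by (simp add: linear_iff_module_hom)
  have G_delta: "G (delta (v, w)) = \<beta> v w" for v w
    unfolding G_def using U by simp
  have "G p = 0" if "p \<in> tensor_rels sV sW" for p
    using that \<beta> unfolding tensor_rels_def bilinear_map_def
    by (elim UnE CollectE exE conjE) (simp_all add: G.diff G.scale G_delta)
  then have "G p = 0" if "q p = 0" for p
    using that quotient_eq_0_iff by (blast intro: G.eq_0_on_span)
  then obtain F where F: "Vector_Spaces.linear sT sU F" and GF: "G = F \<circ> q"
    using linear_factor_through_surj[OF linear_quotient surj_quotient G] by blast
  have "F (q (delta (v, w))) = \<beta> v w" for v w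
    using G_delta by (simp add: GF)
  with F show ?thesis
    by blast
qed

lemma
  assumes "vector_space sU" and "bilinear_map sV sW sU \<beta>"
  shows linear_tensor_lift: "Vector_Spaces.linear sT sU (tensor_lift sT sU q \<beta>)"
    and tensor_lift_tensor: "tensor_lift sT sU q \<beta> (q (delta (v, w))) = \<beta> v w"
proof -
  have "\<exists>!F. Vector_Spaces.linear sT sU F \<and> (\<forall>v w. F (q (delta (v, w))) = \<beta> v w)"
    using ex_linear_lift[OF assms] by (rule ex_ex1I) (auto intro: linear_eq_on_tensors)
  then have "Vector_Spaces.linear sT sU (tensor_lift sT sU q \<beta>) \<and>
      (\<forall>v w. tensor_lift sT sU q \<beta> (q (delta (v, w))) = \<beta> v w)"
    unfolding tensor_lift_def by (rule theI')
  then show "Vector_Spaces.linear sT sU (tensor_lift sT sU q \<beta>)"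
    and "tensor_lift sT sU q \<beta> (q (delta (v, w))) = \<beta> v w"
    by blast+
qed

end

lemma
  assumes T: "tensor_product sV sW sT q" and T': "tensor_product sV' sW' sT' q'"
    and f: "Vector_Spaces.linear sV sV' f" and g: "Vector_Spaces.linear sW sW' g"
  shows linear_tensor_map: "Vector_Spaces.linear sT sT' (tensor_map sT sT' q q' f g)"
    and tensor_map_tensor: "tensor_map sT sT' q q' f g (q (delta (v, w))) = q' (delta (f v, g w))"
proof -
  have "bilinear_map sV sW sT' (\<lambda>v w. q' (delta (f v, g w)))"
    using tensor_product.bilinear_tensor[OF T'] f g by (rule bilinear_map_compose_linear)
  then show "Vector_Spaces.linear sT sT' (tensor_map sT sT' q q' f g)"
    and "tensor_map sT sT' q q' f g (q (delta (v, w))) = q' (delta (f v, g w))"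
    unfolding tensor_map_def
    using tensor_product.linear_tensor_lift[OF T tensor_product.vector_space_tensor[OF T']]
      tensor_product.tensor_lift_tensor[OF T tensor_product.vector_space_tensor[OF T']]
    by blast+
qed

lemma tensor_map_id:
  assumes T: "tensor_product sV sW sT q"
  shows "tensor_map sT sT q q id id = id"
proof (rule tensor_product.linear_eq_on_tensors[OF T])
  show "Vector_Spaces.linear sT sT (tensor_map sT sT q q id id)"
    using T T vector_space.linear_id[OF tensor_product.vector_space_left[OF T]]
      vector_space.linear_id[OF tensor_product.vector_space_right[OF T]]
    by (rule linear_tensor_map)
  show "Vector_Spaces.linear sT sT id"
    using tensor_product.vector_space_tensor[OF T] by (rule vector_space.linear_id)
qed (simp add: tensor_map_tensor[OF T T] tensor_product.vector_space_left[OF T]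
      tensor_product.vector_space_right[OF T] vector_space.linear_id)

lemma tensor_map_compose:
  assumes T: "tensor_product sV sW sT q" and T': "tensor_product sV' sW' sT' q'"
    and T'': "tensor_product sV'' sW'' sT'' q''"
    and f: "Vector_Spaces.linear sV sV' f" and g: "Vector_Spaces.linear sW sW' g"
    and f': "Vector_Spaces.linear sV' sV'' f'" and g': "Vector_Spaces.linear sW' sW'' g'"
  shows "tensor_map sT' sT'' q' q'' f' g' \<circ> tensor_map sT sT' q q' f g
    = tensor_map sT sT'' q q'' (f' \<circ> f) (g' \<circ> g)"
proof (rule tensor_product.linear_eq_on_tensors[OF T])
  show "Vector_Spaces.linear sT sT'' (tensor_map sT' sT'' q' q'' f' g' \<circ> tensor_map sT sT' q q' f g)"
    using linear_tensor_map[OF T T' f g] linear_tensor_map[OF T' T'' f' g']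
    by (rule Vector_Spaces.linear_compose)
  show "Vector_Spaces.linear sT sT'' (tensor_map sT sT'' q q'' (f' \<circ> f) (g' \<circ> g))"
    using T T'' Vector_Spaces.linear_compose[OF f f'] Vector_Spaces.linear_compose[OF g g']
    by (rule linear_tensor_map)
qed (simp add: tensor_map_tensor[OF T T' f g] tensor_map_tensor[OF T' T'' f' g']
      tensor_map_tensor[OF T T'' Vector_Spaces.linear_compose[OF f f']
        Vector_Spaces.linear_compose[OF g g']])

lemma inj_tensor_map:
  assumes T: "tensor_product sV sW sT q" and T': "tensor_product sV' sW' sT' q'"
    and f: "Vector_Spaces.linear sV sV' f" "inj f" and g: "Vector_Spaces.linear sW sW' g" "inj g"
  shows "inj (tensor_map sT sT' q q' f g)"
proof -
  have "vector_space_pair sV sV'" "vector_space_pair sW sW'"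
    using f(1) g(1) by (simp_all add: vector_space_pair_def Vector_Spaces.linear_iff)
  then obtain f' g' where f': "Vector_Spaces.linear sV' sV f'" "f' \<circ> f = id"
    and g': "Vector_Spaces.linear sW' sW g'" "g' \<circ> g = id"
    using f g by (metis vector_space_pair.linear_injective_left_inverse)
  have "tensor_map sT' sT q' q f' g' \<circ> tensor_map sT sT' q q' f g = id"
    using tensor_map_compose[OF T T' T f(1) g(1) f'(1) g'(1)] f'(2) g'(2) tensor_map_id[OF T]
    by simp
  then show ?thesis
    by (metis inj_on_id inj_on_imageI2)
qed

lemma pcd_morphism_inj_projection:
  assumes m: "pcd_morphism sH sY sYH qYH sYb \<pi>Y \<rho>Y sX sXH qXH sXb \<pi>X \<rho>X f fb"
    and "inj f" "inj \<pi>X"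
  shows "inj \<pi>Y"
proof -
  from m have Y: "tensor_product sY sH sYH qYH" and X: "tensor_product sX sH sXH qXH"
    and f: "Vector_Spaces.linear sY sX f"
    and \<pi>: "fb \<circ> \<pi>Y = \<pi>X \<circ> tensor_map sYH sXH qYH qXH f id"
    by (auto simp: pcd_morphism_def partial_comodule_datum_def tensor_product_def)
  have "Vector_Spaces.linear sH sH id"
    using tensor_product.vector_space_right[OF X] by (rule vector_space.linear_id)
  then have "inj (tensor_map sYH sXH qYH qXH f id)"
    using inj_tensor_map[OF Y X f \<open>inj f\<close>] by simp
  with \<open>inj \<pi>X\<close> have "inj (fb \<circ> \<pi>Y)"
    by (simp add: \<pi> inj_compose)
  then show ?thesis
    by (rule inj_on_imageI2)
qed

theorem mainTheorem8:
  fixes sH :: "'k::field \<Rightarrow> 'h::ab_group_add \<Rightarrow> 'h"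
    and sHH :: "'k \<Rightarrow> 'hh::ab_group_add \<Rightarrow> 'hh" and qHH :: "('h \<times> 'h \<Rightarrow>\<^sub>0 'k) \<Rightarrow> 'hh"
    and sHA :: "'k \<Rightarrow> 'ha::ab_group_add \<Rightarrow> 'ha" and qHA :: "('hh \<times> 'h \<Rightarrow>\<^sub>0 'k) \<Rightarrow> 'ha"
    and sHB :: "'k \<Rightarrow> 'hb::ab_group_add \<Rightarrow> 'hb" and qHB :: "('h \<times> 'hh \<Rightarrow>\<^sub>0 'k) \<Rightarrow> 'hb"
    and \<Delta> :: "'h \<Rightarrow> 'hh" and \<epsilon> :: "'h \<Rightarrow> 'k"
    and sX :: "'k \<Rightarrow> 'x::ab_group_add \<Rightarrow> 'x"
    and sXH :: "'k \<Rightarrow> 'xh::ab_group_add \<Rightarrow> 'xh" and qXH :: "('x \<times> 'h \<Rightarrow>\<^sub>0 'k) \<Rightarrow> 'xh"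
    and sXA :: "'k \<Rightarrow> 'xa::ab_group_add \<Rightarrow> 'xa" and qXA :: "('xh \<times> 'h \<Rightarrow>\<^sub>0 'k) \<Rightarrow> 'xa"
    and sXB :: "'k \<Rightarrow> 'xb::ab_group_add \<Rightarrow> 'xb" and qXB :: "('x \<times> 'hh \<Rightarrow>\<^sub>0 'k) \<Rightarrow> 'xb"
    and \<rho>X :: "'x \<Rightarrow> 'xh"
    and sY :: "'k \<Rightarrow> 'y::ab_group_add \<Rightarrow> 'y"
    and sYH :: "'k \<Rightarrow> 'yh::ab_group_add \<Rightarrow> 'yh" and qYH :: "('y \<times> 'h \<Rightarrow>\<^sub>0 'k) \<Rightarrow> 'yh"
    and sYb :: "'k \<Rightarrow> 'yb::ab_group_add \<Rightarrow> 'yb"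
    and \<pi>Y :: "'yh \<Rightarrow> 'yb" and \<rho>Y :: "'y \<Rightarrow> 'yb"
    and f :: "'y \<Rightarrow> 'x" and fb :: "'yb \<Rightarrow> 'xh"
  assumes "coalgebra sH sHH qHH sHA qHA sHB qHB \<Delta> \<epsilon>"
    and "comodule sH sHH qHH \<Delta> \<epsilon> sX sXH qXH sXA qXA sXB qXB \<rho>X"
    and "partial_subcomodule sH sY sYH qYH sYb \<pi>Y \<rho>Y sX sXH qXH sXH id \<rho>X f fb"
  shows "global_pcd sH sY sYH qYH sYb \<pi>Y \<rho>Y"
proof -
  from assms(3) have m: "pcd_morphism sH sY sYH qYH sYb \<pi>Y \<rho>Y sX sXH qXH sXH id \<rho>X f fb"
    and "inj f" and Y: "partial_comodule_datum sH sY sYH qYH sYb \<pi>Y \<rho>Y"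
    by (auto simp: partial_subcomodule_def pcd_morphism_def)
  have "inj \<pi>Y"
    using pcd_morphism_inj_projection[OF m \<open>inj f\<close>] by simp
  with Y show ?thesis
    by (simp add: global_pcd_def partial_comodule_datum_def bij_def)
qed

end
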